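(* Let $\mathcal A\subseteq\mathbb R^s$ be a Borel set with $\lambda^s(\mathcal A)>0$, let $h\colon\mathbb R^s\to\mathbb R^m$, with $s\le m$, be real analytic with $Jh$ not identically zero, and let $f\colon\mathbb R^m\to\mathbb R^n$ be real analytic. If $f$ is one-to-one on $h(\mathcal A)$, then $D(f\circ h)(\mathbf z)\neq\mathbf 0$ for $\lambda^s$-almost all $\mathbf z\in\mathcal A$.
   Context: For differentiable $h\colon\mathbb R^s\to\mathbb R^m$ with $m\ge s$, $Jh(\mathbf v)=\sqrt{\det(Dh(\mathbf v)^TDh(\mathbf v))}$, where $Dh(\mathbf v)\in\mathbb R^{m\times s}$ is the differential. $\lambda^s$ is Lebesgue measure on $\mathbb R^s$. *)

theory Defs
  imports "HOL-Analysis.Analysis"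
begin

text \<open>Real analyticity of a map between Euclidean spaces (given as vector types):
  around every point the map equals an (unconditionally, hence absolutely) convergent
  multivariate power series, indexed by multi-indices \<open>\<alpha> :: 's \<Rightarrow> nat\<close>.\<close>
definition real_analytic :: "(real^'s \<Rightarrow> real^'m) \<Rightarrow> bool" where
  "real_analytic g \<longleftrightarrow>
     (\<forall>x0. \<exists>e>0. \<exists>c :: ('s \<Rightarrow> nat) \<Rightarrow> real^'m.
        \<forall>x\<in>ball x0 e.
          ((\<lambda>\<alpha>. (\<Prod>i\<in>UNIV. (x$i - x0$i) ^ \<alpha> i) *\<^sub>R c \<alpha>) has_sum g x) UNIV)"

definition Dmat :: "(real^'s \<Rightarrow> real^'m) \<Rightarrow> real^'s \<Rightarrow> real^'s^'m" where
  "Dmat g v = matrix (frechet_derivative g (at v))"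

definition jacobian_J :: "(real^'s \<Rightarrow> real^'m) \<Rightarrow> real^'s \<Rightarrow> real" where
  "jacobian_J g v = sqrt (det (transpose (Dmat g v) ** Dmat g v))"

end

theory Submission
  imports Defs "HOL-Complex_Analysis.Complex_Analysis"
begin

text \<open>Suppose \<open>D(f \<circ> h)\<close> vanished on a set \<open>E \<subseteq> A\<close> of positive measure and fix a coordinate
  direction \<open>b\<close>. By Fubini, the lines in direction \<open>b\<close> that meet \<open>E\<close> in positive measure sweep out
  a set of positive measure. On such a line \<open>f \<circ> h\<close> is real analytic with derivative vanishing
  on a set with a limit point, hence constant; injectivity of \<open>f\<close> on \<open>h(A)\<close> makes \<open>h\<close> constant
  on that set, and the identity theorem makes \<open>h\<close> constant on the whole line. So the real analytic
  map \<open>y \<mapsto> h(y + s b) - h(y)\<close> vanishes on a set of positive measure, hence everywhere (identity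
  theorem along coordinate lines once more). Then \<open>\<partial>h/\<partial>b = 0\<close>, so \<open>Jh = 0\<close> identically.
  Real analyticity in one variable is used through holomorphic extension, so that the identity
  theorem of complex analysis applies.\<close>

no_notation fps_nth (infixl \<open>$\<close> 75)

section \<open>Real functions with local holomorphic extensions\<close>

definition holomorphic_extendable :: "(real \<Rightarrow> real) \<Rightarrow> bool" where
  "holomorphic_extendable \<phi> \<longleftrightarrow> (\<forall>t0. \<exists>r>0. \<exists>\<Psi>. \<Psi> holomorphic_on ball (complex_of_real t0) r \<and>
      (\<forall>t. \<bar>t - t0\<bar> < r \<longrightarrow> \<Psi> (of_real t) = of_real (\<phi> t)))"

lemma deriv_of_holomorphic_extension:
  assumes hol: "\<Psi> holomorphic_on ball (complex_of_real t0) r"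
    and eq: "\<And>t. \<bar>t - t0\<bar> < r \<Longrightarrow> \<Psi> (of_real t) = of_real (\<phi> t)"
    and s: "\<bar>s - t0\<bar> < r"
  shows "(\<phi> has_real_derivative deriv \<phi> s) (at s)" "deriv \<Psi> (of_real s) = of_real (deriv \<phi> s)"
proof -
  have "complex_of_real s \<in> ball (of_real t0) r"
    using s by (simp add: dist_norm abs_minus_commute flip: of_real_diff)
  then have "(\<Psi> has_field_derivative deriv \<Psi> (of_real s)) (at (of_real s))"
    using holomorphic_derivI[OF hol open_ball] by blast
  then have "((\<lambda>x. \<Psi> (of_real x)) has_vector_derivative deriv \<Psi> (of_real s)) (at s)"
    by (rule has_vector_derivative_real_field)
  then have d: "((\<lambda>x. complex_of_real (\<phi> x)) has_vector_derivative deriv \<Psi> (of_real s)) (at s)"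
    by (rule has_vector_derivative_transform_within_open[of _ _ _ "{t0 - r <..< t0 + r}"])
      (use s eq in \<open>auto simp: abs_less_iff\<close>)
  have "((\<lambda>x. Re (complex_of_real (\<phi> x))) has_field_derivative Re (deriv \<Psi> (of_real s))) (at s)"
    by (rule has_field_derivative_Re[OF d])
  then have d': "(\<phi> has_real_derivative Re (deriv \<Psi> (of_real s))) (at s)"
    by simp
  then have "((\<lambda>x. complex_of_real (\<phi> x)) has_vector_derivative of_real (Re (deriv \<Psi> (of_real s)))) (at s)"
    by (rule has_vector_derivative_of_real)
  then have "deriv \<Psi> (of_real s) = of_real (Re (deriv \<Psi> (of_real s)))"
    using vector_derivative_unique_at d by blast
  moreover have "deriv \<phi> s = Re (deriv \<Psi> (of_real s))"
    using DERIV_imp_deriv[OF d'] .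
  ultimately show "(\<phi> has_real_derivative deriv \<phi> s) (at s)" "deriv \<Psi> (of_real s) = of_real (deriv \<phi> s)"
    using d' by simp_all
qed

lemma holomorphic_extendable_has_real_derivative:
  assumes "holomorphic_extendable \<phi>"
  shows "(\<phi> has_real_derivative deriv \<phi> t) (at t)"
  using assms unfolding holomorphic_extendable_def
  by (metis deriv_of_holomorphic_extension(1) abs_zero diff_self)

lemma holomorphic_extendable_deriv:
  assumes "holomorphic_extendable \<phi>"
  shows "holomorphic_extendable (deriv \<phi>)"
  unfolding holomorphic_extendable_def
proof
  fix t0
  obtain r \<Psi> where r: "r > 0" "\<Psi> holomorphic_on ball (complex_of_real t0) r"
    "\<And>t. \<bar>t - t0\<bar> < r \<Longrightarrow> \<Psi> (of_real t) = of_real (\<phi> t)"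
    using assms unfolding holomorphic_extendable_def by blast
  show "\<exists>r>0. \<exists>\<Psi>. \<Psi> holomorphic_on ball (complex_of_real t0) r \<and>
      (\<forall>t. \<bar>t - t0\<bar> < r \<longrightarrow> \<Psi> (of_real t) = of_real (deriv \<phi> t))"
    using r deriv_of_holomorphic_extension(2)[OF r(2) r(3)] holomorphic_deriv[OF r(2) open_ball]
    by blast
qed

lemma holomorphic_extendable_diff:
  assumes "holomorphic_extendable \<phi>" "holomorphic_extendable \<psi>"
  shows "holomorphic_extendable (\<lambda>t. \<phi> t - \<psi> t)"
  unfolding holomorphic_extendable_def
proof
  fix t0
  obtain r \<Psi> where r: "r > 0" "\<Psi> holomorphic_on ball (complex_of_real t0) r"
      "\<And>t. \<bar>t - t0\<bar> < r \<Longrightarrow> \<Psi> (of_real t) = of_real (\<phi> t)"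
    using assms unfolding holomorphic_extendable_def by blast
  obtain r' \<Psi>' where r': "r' > 0" "\<Psi>' holomorphic_on ball (complex_of_real t0) r'"
      "\<And>t. \<bar>t - t0\<bar> < r' \<Longrightarrow> \<Psi>' (of_real t) = of_real (\<psi> t)"
    using assms unfolding holomorphic_extendable_def by blast
  have "(\<lambda>z. \<Psi> z - \<Psi>' z) holomorphic_on ball (complex_of_real t0) (min r r')"
    by (intro holomorphic_intros holomorphic_on_subset[OF r(2)] holomorphic_on_subset[OF r'(2)]) auto
  then show "\<exists>r>0. \<exists>\<Psi>. \<Psi> holomorphic_on ball (complex_of_real t0) r \<and>
      (\<forall>t. \<bar>t - t0\<bar> < r \<longrightarrow> \<Psi> (of_real t) = of_real (\<phi> t - \<psi> t))"
    using r r' by (intro exI[of _ "min r r'"] conjI exI[of _ "\<lambda>z. \<Psi> z - \<Psi>' z"]) auto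
qed

lemma holomorphic_extendable_const: "holomorphic_extendable (\<lambda>t. c)"
  unfolding holomorphic_extendable_def
  by (intro allI exI[of _ 1] conjI exI[of _ "\<lambda>_. complex_of_real c"]) auto

lemma islimpt_image_of_real:
  assumes "x islimpt S"
  shows "complex_of_real x islimpt (of_real ` S)"
  using assms unfolding islimpt_approachable
  by (metis dist_of_real image_eqI of_real_eq_iff)

lemma holomorphic_extendable_zero_near_limpt_of_zeros:
  assumes ext: "holomorphic_extendable \<phi>" and lim: "t islimpt {s. \<phi> s = 0}"
  shows "\<exists>r>0. \<forall>s. \<bar>s - t\<bar> < r \<longrightarrow> \<phi> s = 0"
proof -
  obtain r \<Psi> where r: "r > 0" "\<Psi> holomorphic_on ball (complex_of_real t) r"
    "\<And>s. \<bar>s - t\<bar> < r \<Longrightarrow> \<Psi> (of_real s) = of_real (\<phi> s)"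
    using ext unfolding holomorphic_extendable_def by blast
  define Z where "Z = complex_of_real ` ({s. \<phi> s = 0} \<inter> ball t r)"
  have "t islimpt ({s. \<phi> s = 0} \<inter> ball t r)"
    using lim r(1)
    by (intro islimpt_Int_eventually) (auto simp: eventually_at dist_commute intro!: exI[of _ r])
  then have "complex_of_real t islimpt Z"
    unfolding Z_def by (rule islimpt_image_of_real)
  moreover have "Z \<subseteq> ball (complex_of_real t) r"
    unfolding Z_def by (auto simp: dist_of_real)
  moreover have "\<Psi> z = 0" if "z \<in> Z" for z
    using that r(3) unfolding Z_def by (auto simp: dist_real_def abs_minus_commute)
  ultimately have "\<Psi> w = 0" if "w \<in> ball (complex_of_real t) r" for w
    by (intro analytic_continuation[OF r(2) open_ball connected_ball _ _ _ _ that]) (use r in auto)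
  then have "\<phi> s = 0" if "\<bar>s - t\<bar> < r" for s
    using r(3)[OF that] that by (auto simp: dist_of_real dist_real_def abs_minus_commute)
  then show ?thesis
    using r(1) by blast
qed

text \<open>The identity theorem: the limit points of the zero set form a nonempty clopen subset of
  \<open>\<real>\<close>.\<close>

lemma holomorphic_extendable_eq_0:
  assumes ext: "holomorphic_extendable \<phi>" and "\<xi> islimpt T" and "\<And>t. t \<in> T \<Longrightarrow> \<phi> t = 0"
  shows "\<phi> t = 0"
proof -
  define U where "U = {t. t islimpt {s. \<phi> s = 0}}"
  have "open U"
    unfolding open_dist
  proof
    fix t assume "t \<in> U"
    then obtain r where r: "r > 0" "\<And>s. \<bar>s - t\<bar> < r \<Longrightarrow> \<phi> s = 0"
      using holomorphic_extendable_zero_near_limpt_of_zeros[OF ext] unfolding U_def by blast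
    have "y \<in> U" if "dist y t < r" for y
    proof -
      have "ball y (r - dist y t) \<subseteq> {s. \<phi> s = 0}"
        using r that by (auto simp: dist_real_def abs_minus_commute)
      then have "y islimpt {s. \<phi> s = 0}"
        using that by (intro islimpt_subset[OF open_imp_islimpt[OF open_ball]]) auto
      then show ?thesis
        unfolding U_def by simp
    qed
    then show "\<exists>e>0. \<forall>y. dist y t < e \<longrightarrow> y \<in> U"
      using r by blast
  qed
  moreover have "closed U"
    unfolding U_def by (rule closed_limpts)
  moreover have "\<xi> \<in> U"
    unfolding U_def mem_Collect_eq by (rule islimpt_subset[OF assms(2)]) (use assms(3) in auto)
  ultimately have "U = UNIV"
    using connected_UNIV[where 'a=real] unfolding connected_clopen
    by (metis closedin_closed_Int empty_iff inf_top.left_neutral open_openin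
        openin_subtopology_Int2 subtopology_UNIV)
  then have "t islimpt {s. \<phi> s = 0}"
    unfolding U_def by blast
  then show ?thesis
    using holomorphic_extendable_zero_near_limpt_of_zeros[OF ext] by force
qed

lemma holomorphic_extendable_const_of_deriv_eq_0:
  assumes ext: "holomorphic_extendable \<psi>" and "\<xi> islimpt T" and "\<And>t. t \<in> T \<Longrightarrow> deriv \<psi> t = 0"
  shows "\<psi> s = \<psi> t"
proof -
  have "deriv \<psi> u = 0" for u
    by (rule holomorphic_extendable_eq_0[OF holomorphic_extendable_deriv[OF ext] assms(2,3)])
  then have "\<forall>u. (\<psi> has_real_derivative 0) (at u)"
    using holomorphic_extendable_has_real_derivative[OF ext] by metis
  then show ?thesis
    by (rule DERIV_isconst_all)
qed

lemma islimpt_of_emeasure_lborel_ne_0: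
  fixes T :: "'a::euclidean_space set"
  assumes "emeasure lborel T \<noteq> 0"
  obtains \<xi> where "\<xi> islimpt T"
proof (rule ccontr)
  assume no_limpt: "\<not> thesis"
  have "finite (T \<inter> cball 0 (real N))" for N :: nat
  proof (rule ccontr)
    assume "infinite (T \<inter> cball 0 (real N))"
    then obtain x where "x islimpt (T \<inter> cball 0 (real N))"
      by (rule bounded_infinite_imp_islimpt[OF order_refl bounded_Int[OF disjI2[OF bounded_cball]]])
    then have "x islimpt T"
      using islimpt_subset by blast
    then show False
      using no_limpt that by blast
  qed
  moreover have "T = (\<Union>N. T \<inter> cball 0 (real N))"
    by (auto simp: dist_norm) (meson real_arch_simple)
  ultimately have "countable T"
    by (metis countable_UN[of UNIV] countable_finite countableI_type)
  then show False
    using assms emeasure_lborel_countable by blast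
qed

section \<open>Real analytic maps of several variables\<close>

lemma real_analytic_local_power_series:
  fixes h :: "real^'s \<Rightarrow> real^'m"
  assumes "real_analytic h"
  obtains r c where "r > 0"
    "\<And>x. (\<forall>i. \<bar>x$i - x0$i\<bar> \<le> r) \<Longrightarrow>
       ((\<lambda>\<alpha>. (\<Prod>i\<in>UNIV. (x$i - x0$i) ^ \<alpha> i) *\<^sub>R c \<alpha>) has_sum h x) UNIV"
    "\<And>j. (\<lambda>\<alpha>. \<bar>c \<alpha> $ j\<bar> * (\<Prod>i\<in>UNIV. r ^ \<alpha> i)) summable_on UNIV"
proof -
  obtain e c where e: "e > 0" and c: "\<And>x. x \<in> ball x0 e \<Longrightarrow>
      ((\<lambda>\<alpha>. (\<Prod>i\<in>UNIV. (x$i - x0$i) ^ \<alpha> i) *\<^sub>R c \<alpha>) has_sum h x) UNIV"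
    using assms unfolding real_analytic_def by blast
  define r where "r = e / (2 * real CARD('s))"
  have r: "r > 0"
    using e by (simp add: r_def)
  have "x \<in> ball x0 e" if "\<forall>i. \<bar>x$i - x0$i\<bar> \<le> r" for x
  proof -
    have "dist x0 x = norm (x - x0)"
      by (simp add: dist_norm norm_minus_commute)
    also have "\<dots> \<le> (\<Sum>i\<in>UNIV. \<bar>(x - x0)$i\<bar>)"
      by (rule norm_le_l1_cart)
    also have "\<dots> \<le> (\<Sum>i\<in>(UNIV::'s set). r)"
      by (intro sum_mono) (use that in auto)
    also have "\<dots> = e / 2"
      using e by (simp add: r_def)
    also have "\<dots> < e"
      using e by simp
    finally show ?thesis
      by simp
  qed
  then have series: "((\<lambda>\<alpha>. (\<Prod>i\<in>UNIV. (x$i - x0$i) ^ \<alpha> i) *\<^sub>R c \<alpha>) has_sum h x) UNIV"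
    if "\<forall>i. \<bar>x$i - x0$i\<bar> \<le> r" for x
    using c that by blast
  have "(\<lambda>\<alpha>. \<bar>c \<alpha> $ j\<bar> * (\<Prod>i\<in>UNIV. r ^ \<alpha> i)) summable_on UNIV" for j
  proof -
    \<comment> \<open>the series converges at the corner \<open>p\<close> of the cube, where all its terms are real
      multiples of \<open>c \<alpha>\<close> with positive factors, hence absolutely\<close>
    define p :: "real^'s" where "p = (\<chi> i. x0$i + r)"
    have "((\<lambda>\<alpha>. (\<Prod>i\<in>UNIV. (p$i - x0$i) ^ \<alpha> i) *\<^sub>R c \<alpha>) has_sum h p) UNIV"
      using r by (intro series) (simp add: p_def)
    then have "((\<lambda>\<alpha>. (\<Prod>i\<in>UNIV. r ^ \<alpha> i) * c \<alpha> $ j) has_sum h p $ j) UNIV"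
      using has_sum_bounded_linear[OF bounded_linear_vec_nth[of j]] by (fastforce simp: p_def)
    then have "(\<lambda>\<alpha>. norm ((\<Prod>i\<in>UNIV. r ^ \<alpha> i) * c \<alpha> $ j)) summable_on UNIV"
      by (intro summable_on_iff_abs_summable_on_real[THEN iffD1] has_sum_imp_summable)
    moreover have "norm ((\<Prod>i\<in>UNIV. r ^ \<alpha> i) * c \<alpha> $ j) = \<bar>c \<alpha> $ j\<bar> * (\<Prod>i\<in>UNIV. r ^ \<alpha> i)" for \<alpha>
      using r by (simp add: abs_mult abs_prod prod_nonneg)
    ultimately show ?thesis
      by simp
  qed
  then show ?thesis
    using that[OF r series] by blast
qed

lemma holomorphic_on_power_series_comp:
  fixes a :: "('k::finite \<Rightarrow> nat) \<Rightarrow> real" and G :: "'k \<Rightarrow> complex \<Rightarrow> complex"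
  assumes summ: "(\<lambda>\<alpha>. \<bar>a \<alpha>\<bar> * (\<Prod>i\<in>UNIV. r ^ \<alpha> i)) summable_on UNIV"
    and hol: "\<And>i. G i holomorphic_on ball z0 \<rho>"
    and bnd: "\<And>i z. z \<in> ball z0 \<rho> \<Longrightarrow> norm (G i z) \<le> r"
  shows "(\<lambda>z. \<Sum>\<^sub>\<infinity>\<alpha>. of_real (a \<alpha>) * (\<Prod>i\<in>UNIV. G i z ^ \<alpha> i)) holomorphic_on ball z0 \<rho>"
    and "\<And>z. z \<in> ball z0 \<rho> \<Longrightarrow> ((\<lambda>\<alpha>. of_real (a \<alpha>) * (\<Prod>i\<in>UNIV. G i z ^ \<alpha> i)) has_sum
            (\<Sum>\<^sub>\<infinity>\<alpha>. of_real (a \<alpha>) * (\<Prod>i\<in>UNIV. G i z ^ \<alpha> i))) UNIV"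
proof -
  define t where "t = (\<lambda>\<alpha> z. complex_of_real (a \<alpha>) * (\<Prod>i\<in>UNIV. G i z ^ \<alpha> i))"
  have norm_t: "norm (t \<alpha> z) \<le> \<bar>a \<alpha>\<bar> * (\<Prod>i\<in>UNIV. r ^ \<alpha> i)" if "z \<in> ball z0 \<rho>" for \<alpha> z
  proof -
    have "norm (t \<alpha> z) = \<bar>a \<alpha>\<bar> * (\<Prod>i\<in>UNIV. norm (G i z) ^ \<alpha> i)"
      by (simp add: t_def norm_mult norm_power flip: prod_norm)
    also have "\<dots> \<le> \<bar>a \<alpha>\<bar> * (\<Prod>i\<in>UNIV. r ^ \<alpha> i)"
      by (intro mult_left_mono prod_mono conjI power_mono bnd that) auto
    finally show ?thesis .
  qed
  show "((\<lambda>\<alpha>. of_real (a \<alpha>) * (\<Prod>i\<in>UNIV. G i z ^ \<alpha> i)) has_sum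
            (\<Sum>\<^sub>\<infinity>\<alpha>. of_real (a \<alpha>) * (\<Prod>i\<in>UNIV. G i z ^ \<alpha> i))) UNIV" if "z \<in> ball z0 \<rho>" for z
  proof -
    have "(\<lambda>\<alpha>. norm (t \<alpha> z)) summable_on UNIV"
      by (rule summable_on_comparison_test[OF summ]) (use norm_t[OF that] in auto)
    then have "(\<lambda>\<alpha>. t \<alpha> z) summable_on UNIV"
      by (rule abs_summable_summable)
    then show ?thesis
      unfolding t_def by simp
  qed
  have "(\<lambda>z. \<Sum>\<^sub>\<infinity>\<alpha>. t \<alpha> z) holomorphic_on ball w \<delta>"
    if sub: "cball w \<delta> \<subseteq> ball z0 \<rho>" for w \<delta>
  proof -
    have ulim: "uniform_limit (cball w \<delta>) (\<lambda>X z. \<Sum>\<alpha>\<in>X. t \<alpha> z) (\<lambda>z. \<Sum>\<^sub>\<infinity>\<alpha>. t \<alpha> z)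
        (finite_subsets_at_top UNIV)"
      by (rule Weierstrass_m_test_general[OF _ summ]) (use norm_t sub in auto)
    have "(\<lambda>z. \<Sum>\<alpha>\<in>X. t \<alpha> z) holomorphic_on ball z0 \<rho>" for X
      unfolding t_def by (intro holomorphic_intros hol)
    then have cont: "\<forall>\<^sub>F X in finite_subsets_at_top UNIV. continuous_on (cball w \<delta>) (\<lambda>z. \<Sum>\<alpha>\<in>X. t \<alpha> z) \<and>
        (\<lambda>z. \<Sum>\<alpha>\<in>X. t \<alpha> z) holomorphic_on ball w \<delta>"
      using sub by (intro always_eventually allI conjI holomorphic_on_imp_continuous_on)
        (meson holomorphic_on_subset ball_subset_cball order_trans)+
    show ?thesis
      by (rule holomorphic_uniform_limit[OF cont ulim]) auto
  qed
  moreover have "\<exists>\<delta>>0. cball w \<delta> \<subseteq> ball z0 \<rho>" if "w \<in> ball z0 \<rho>" for w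
    using that open_contains_cball open_ball by blast
  ultimately have "\<exists>f'. ((\<lambda>z. \<Sum>\<^sub>\<infinity>\<alpha>. t \<alpha> z) has_field_derivative f') (at w)"
    if "w \<in> ball z0 \<rho>" for w
    using that holomorphic_on_open[OF open_ball] by (metis centre_in_ball)
  then show "(\<lambda>z. \<Sum>\<^sub>\<infinity>\<alpha>. of_real (a \<alpha>) * (\<Prod>i\<in>UNIV. G i z ^ \<alpha> i)) holomorphic_on ball z0 \<rho>"
    by (simp add: holomorphic_on_open t_def)
qed

lemma holomorphic_extension_of_power_series:
  fixes a :: "('k::finite \<Rightarrow> nat) \<Rightarrow> real" and G :: "'k \<Rightarrow> complex \<Rightarrow> complex"
  assumes summ: "(\<lambda>\<alpha>. \<bar>a \<alpha>\<bar> * (\<Prod>i\<in>UNIV. r ^ \<alpha> i)) summable_on UNIV"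
    and hol: "\<And>i. G i holomorphic_on ball (complex_of_real t0) \<rho>"
    and bnd: "\<And>i z. z \<in> ball (complex_of_real t0) \<rho> \<Longrightarrow> norm (G i z) \<le> r"
    and \<rho>: "\<rho> > 0"
    and series: "\<And>t. \<bar>t - t0\<bar> < \<rho> \<Longrightarrow>
       ((\<lambda>\<alpha>. of_real (a \<alpha>) * (\<Prod>i\<in>UNIV. G i (of_real t) ^ \<alpha> i)) has_sum of_real (\<phi> t)) UNIV"
  shows "\<exists>r>0. \<exists>\<Psi>. \<Psi> holomorphic_on ball (complex_of_real t0) r \<and>
      (\<forall>t. \<bar>t - t0\<bar> < r \<longrightarrow> \<Psi> (of_real t) = of_real (\<phi> t))"
proof (intro exI conjI allI impI)
  let ?\<Psi> = "\<lambda>z. \<Sum>\<^sub>\<infinity>\<alpha>. of_real (a \<alpha>) * (\<Prod>i\<in>UNIV. G i z ^ \<alpha> i)"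
  show "?\<Psi> holomorphic_on ball (of_real t0) \<rho>"
    by (rule holomorphic_on_power_series_comp(1)[OF summ hol bnd])
  fix t
  assume t: "\<bar>t - t0\<bar> < \<rho>"
  then have "of_real t \<in> ball (complex_of_real t0) \<rho>"
    by (simp add: dist_norm abs_minus_commute flip: of_real_diff)
  from holomorphic_on_power_series_comp(2)[OF summ hol bnd this]
  show "?\<Psi> (of_real t) = of_real (\<phi> t)"
    by (rule has_sum_unique[OF _ series[OF t]])
qed (fact \<rho>)

lemma holomorphic_extendable_real_analytic_line:
  fixes h :: "real^'s \<Rightarrow> real^'m"
  assumes "real_analytic h"
  shows "holomorphic_extendable (\<lambda>t. h (x + t *\<^sub>R v) $ j)"
  unfolding holomorphic_extendable_def
proof
  fix t0
  define y0 where "y0 = x + t0 *\<^sub>R v"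
  obtain r c where r: "r > 0"
    and series: "\<And>y. (\<forall>i. \<bar>y$i - y0$i\<bar> \<le> r) \<Longrightarrow>
       ((\<lambda>\<alpha>. (\<Prod>i\<in>UNIV. (y$i - y0$i) ^ \<alpha> i) *\<^sub>R c \<alpha>) has_sum h y) UNIV"
    and summ: "\<And>j. (\<lambda>\<alpha>. \<bar>c \<alpha> $ j\<bar> * (\<Prod>i\<in>UNIV. r ^ \<alpha> i)) summable_on UNIV"
    using real_analytic_local_power_series[OF assms, of y0] by blast
  define V where "V = norm v + 1"
  have V: "V > 0" "\<And>i. \<bar>v$i\<bar> \<le> V"
    unfolding V_def using norm_ge_zero[of v] by (auto intro: add_increasing2 add_nonneg_pos component_le_norm_cart)
  define \<rho> where "\<rho> = r / V"
  have \<rho>: "\<rho> > 0" "V * \<rho> = r"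
    using r V by (simp_all add: \<rho>_def)
  define G where "G = (\<lambda>i z. complex_of_real (v$i) * (z - of_real t0))"
  show "\<exists>r>0. \<exists>\<Psi>. \<Psi> holomorphic_on ball (complex_of_real t0) r \<and>
      (\<forall>t. \<bar>t - t0\<bar> < r \<longrightarrow> \<Psi> (of_real t) = of_real (h (x + t *\<^sub>R v) $ j))"
  proof (rule holomorphic_extension_of_power_series[OF summ[of j] _ _ \<rho>(1)])
    show "G i holomorphic_on ball (complex_of_real t0) \<rho>" for i
      unfolding G_def by (intro holomorphic_intros)
    show "norm (G i z) \<le> r" if "z \<in> ball (complex_of_real t0) \<rho>" for i z
    proof -
      have "norm (G i z) = \<bar>v$i\<bar> * norm (z - of_real t0)"
        by (simp add: G_def norm_mult)
      also have "\<dots> \<le> V * \<rho>"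
        using that V(2)[of i] by (intro mult_mono) (auto simp: dist_norm norm_minus_commute)
      finally show ?thesis
        using \<rho>(2) by simp
    qed
    fix t
    assume t: "\<bar>t - t0\<bar> < \<rho>"
    have comp: "(x + t *\<^sub>R v)$i - y0$i = (t - t0) * v$i" for i
      by (simp add: y0_def algebra_simps)
    have "\<bar>(x + t *\<^sub>R v)$i - y0$i\<bar> \<le> r" for i
    proof -
      have "\<bar>(x + t *\<^sub>R v)$i - y0$i\<bar> = \<bar>t - t0\<bar> * \<bar>v$i\<bar>"
        by (subst comp) (simp add: abs_mult)
      also have "\<dots> \<le> \<rho> * V"
        using t V(2)[of i] by (intro mult_mono) auto
      finally show ?thesis
        using \<rho>(2) by (simp add: mult.commute)
    qed
    then have "((\<lambda>\<alpha>. (\<Prod>i\<in>UNIV. ((x + t *\<^sub>R v)$i - y0$i) ^ \<alpha> i) *\<^sub>R c \<alpha>) has_sum h (x + t *\<^sub>R v)) UNIV"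
      using series by blast
    from has_sum_bounded_linear[OF bounded_linear_vec_nth[of j] this]
    have "((\<lambda>\<alpha>. (\<Prod>i\<in>UNIV. ((t - t0) * v$i) ^ \<alpha> i) * c \<alpha> $ j) has_sum h (x + t *\<^sub>R v) $ j) UNIV"
      unfolding comp by simp
    from has_sum_bounded_linear[OF bounded_linear_of_real this]
    show "((\<lambda>\<alpha>. complex_of_real (c \<alpha> $ j) * (\<Prod>i\<in>UNIV. G i (complex_of_real t) ^ \<alpha> i)) has_sum
          complex_of_real (h (x + t *\<^sub>R v) $ j)) UNIV"
      by (simp add: G_def mult.commute flip: of_real_diff of_real_mult of_real_power of_real_prod)
  qed
qed

lemma holomorphic_extensions_near:
  fixes \<phi> :: "'i::finite \<Rightarrow> real \<Rightarrow> real"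
  assumes ext: "\<And>i. holomorphic_extendable (\<phi> i)" and r: "r > 0"
  obtains \<rho> \<Psi> where "\<rho> > 0" "\<And>i. \<Psi> i holomorphic_on ball (complex_of_real t0) \<rho>"
    "\<And>i t. \<bar>t - t0\<bar> < \<rho> \<Longrightarrow> \<Psi> i (of_real t) = of_real (\<phi> i t)"
    "\<And>i z. z \<in> ball (complex_of_real t0) \<rho> \<Longrightarrow> norm (\<Psi> i z - of_real (\<phi> i t0)) < r"
proof -
  have "\<forall>i. \<exists>ri \<Psi>. ri > 0 \<and> \<Psi> holomorphic_on ball (complex_of_real t0) ri \<and>
      (\<forall>t. \<bar>t - t0\<bar> < ri \<longrightarrow> \<Psi> (of_real t) = of_real (\<phi> i t))"
    using ext unfolding holomorphic_extendable_def by blast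
  then obtain R \<Psi> where R: "\<And>i. R i > 0" "\<And>i. \<Psi> i holomorphic_on ball (complex_of_real t0) (R i)"
     "\<And>i t. \<bar>t - t0\<bar> < R i \<Longrightarrow> \<Psi> i (of_real t) = of_real (\<phi> i t)"
    by metis
  have "eventually (\<lambda>z. z \<in> ball (complex_of_real t0) (R i) \<and>
      norm (\<Psi> i z - of_real (\<phi> i t0)) < r) (nhds (complex_of_real t0))" for i
  proof -
    have "continuous (at (complex_of_real t0)) (\<Psi> i)"
      by (rule continuous_on_interior[OF holomorphic_on_imp_continuous_on[OF R(2)]]) (use R(1) in auto)
    moreover have "\<Psi> i (of_real t0) = of_real (\<phi> i t0)"
      using R(3)[of t0 i] R(1)[of i] by simp
    ultimately have "(\<Psi> i \<longlongrightarrow> of_real (\<phi> i t0)) (nhds (complex_of_real t0))"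
      by (simp add: continuous_at tendsto_nhds_iff)
    then have "eventually (\<lambda>z. dist (\<Psi> i z) (of_real (\<phi> i t0)) < r) (nhds (complex_of_real t0))"
      using r tendstoD by blast
    moreover have "eventually (\<lambda>z. z \<in> ball (complex_of_real t0) (R i)) (nhds (complex_of_real t0))"
      using R(1) by (intro eventually_nhds_in_open) auto
    ultimately show ?thesis
      by eventually_elim (simp add: dist_norm)
  qed
  then have "eventually (\<lambda>z. \<forall>i. z \<in> ball (complex_of_real t0) (R i) \<and>
      norm (\<Psi> i z - of_real (\<phi> i t0)) < r) (nhds (complex_of_real t0))"
    by (rule eventually_all_finite)
  then obtain \<rho> where \<rho>: "\<rho> > 0" and near: "\<And>z i. dist z (complex_of_real t0) < \<rho> \<Longrightarrow>
       z \<in> ball (complex_of_real t0) (R i) \<and> norm (\<Psi> i z - of_real (\<phi> i t0)) < r"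
    unfolding eventually_nhds_metric by blast
  have in_ball: "z \<in> ball (complex_of_real t0) (R i)"
    and close: "norm (\<Psi> i z - of_real (\<phi> i t0)) < r"
    if "z \<in> ball (complex_of_real t0) \<rho>" for z i
    using near[of z i] that by (simp_all add: dist_commute)
  show ?thesis
  proof (rule that[OF \<rho> _ _ close])
    show "\<Psi> i holomorphic_on ball (complex_of_real t0) \<rho>" for i
      by (rule holomorphic_on_subset[OF R(2)]) (use in_ball in blast)
    show "\<Psi> i (of_real t) = of_real (\<phi> i t)" if "\<bar>t - t0\<bar> < \<rho>" for i t
    proof (rule R(3))
      have "complex_of_real t \<in> ball (complex_of_real t0) \<rho>"
        using that by (simp add: dist_norm abs_minus_commute flip: of_real_diff)
      from in_ball[OF this, of i] show "\<bar>t - t0\<bar> < R i"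
        by (simp add: dist_norm abs_minus_commute flip: of_real_diff)
    qed
  qed
qed

lemma holomorphic_extendable_real_analytic_comp_line:
  fixes h :: "real^'s \<Rightarrow> real^'m" and f :: "real^'m \<Rightarrow> real^'n"
  assumes h: "real_analytic h" and f: "real_analytic f"
  shows "holomorphic_extendable (\<lambda>t. f (h (x + t *\<^sub>R v)) $ j)"
  unfolding holomorphic_extendable_def
proof
  fix t0
  define y1 where "y1 = h (x + t0 *\<^sub>R v)"
  obtain r d where r: "r > 0"
    and series: "\<And>y. (\<forall>i. \<bar>y$i - y1$i\<bar> \<le> r) \<Longrightarrow>
       ((\<lambda>\<alpha>. (\<Prod>i\<in>UNIV. (y$i - y1$i) ^ \<alpha> i) *\<^sub>R d \<alpha>) has_sum f y) UNIV"
    and summ: "\<And>j. (\<lambda>\<alpha>. \<bar>d \<alpha> $ j\<bar> * (\<Prod>i\<in>UNIV. r ^ \<alpha> i)) summable_on UNIV"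
    using real_analytic_local_power_series[OF f, of y1] by blast
  have line: "holomorphic_extendable (\<lambda>t. h (x + t *\<^sub>R v) $ i)" for i
    by (rule holomorphic_extendable_real_analytic_line[OF h])
  obtain \<rho> \<Psi> where \<rho>: "\<rho> > 0" and hol: "\<And>i. \<Psi> i holomorphic_on ball (complex_of_real t0) \<rho>"
    and ext: "\<And>i t. \<bar>t - t0\<bar> < \<rho> \<Longrightarrow> \<Psi> i (of_real t) = of_real (h (x + t *\<^sub>R v) $ i)"
    and near: "\<And>i z. z \<in> ball (complex_of_real t0) \<rho> \<Longrightarrow> norm (\<Psi> i z - of_real (y1 $ i)) < r"
    unfolding y1_def
    by (rule holomorphic_extensions_near[where \<phi> = "\<lambda>i t. h (x + t *\<^sub>R v) $ i" and ?t0.0 = t0, OF line r]) blast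
  define G where "G = (\<lambda>i z. \<Psi> i z - complex_of_real (y1$i))"
  show "\<exists>r>0. \<exists>\<Psi>. \<Psi> holomorphic_on ball (complex_of_real t0) r \<and>
      (\<forall>t. \<bar>t - t0\<bar> < r \<longrightarrow> \<Psi> (of_real t) = of_real (f (h (x + t *\<^sub>R v)) $ j))"
  proof (rule holomorphic_extension_of_power_series[OF summ[of j] _ _ \<rho>, where G = G])
    show "G i holomorphic_on ball (complex_of_real t0) \<rho>" for i
      unfolding G_def by (intro holomorphic_intros hol)
    show "norm (G i z) \<le> r" if "z \<in> ball (complex_of_real t0) \<rho>" for i z
      using near[OF that, of i] by (simp add: G_def)
    fix t
    assume t: "\<bar>t - t0\<bar> < \<rho>"
    then have t_ball: "complex_of_real t \<in> ball (complex_of_real t0) \<rho>"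
      by (simp add: dist_norm abs_minus_commute flip: of_real_diff)
    have G_t: "G i (of_real t) = of_real (h (x + t *\<^sub>R v) $ i - y1 $ i)" for i
      using ext[OF t] by (simp add: G_def)
    have "\<bar>h (x + t *\<^sub>R v) $ i - y1$i\<bar> \<le> r" for i
      using near[OF t_ball, of i] ext[OF t, of i] by (simp flip: of_real_diff)
    then have "((\<lambda>\<alpha>. (\<Prod>i\<in>UNIV. (h (x + t *\<^sub>R v)$i - y1$i) ^ \<alpha> i) *\<^sub>R d \<alpha>) has_sum
        f (h (x + t *\<^sub>R v))) UNIV"
      using series by blast
    from has_sum_bounded_linear[OF bounded_linear_vec_nth[of j] this]
    have "((\<lambda>\<alpha>. (\<Prod>i\<in>UNIV. (h (x + t *\<^sub>R v)$i - y1$i) ^ \<alpha> i) * d \<alpha> $ j) has_sum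
        f (h (x + t *\<^sub>R v)) $ j) UNIV"
      by simp
    from has_sum_bounded_linear[OF bounded_linear_of_real this]
    show "((\<lambda>\<alpha>. complex_of_real (d \<alpha> $ j) * (\<Prod>i\<in>UNIV. G i (complex_of_real t) ^ \<alpha> i)) has_sum
          complex_of_real (f (h (x + t *\<^sub>R v)) $ j)) UNIV"
      by (simp add: G_t mult.commute flip: of_real_diff of_real_mult of_real_power of_real_prod)
  qed
qed

lemma sum_multiindex_ge_2:
  fixes \<alpha> :: "'s::finite \<Rightarrow> nat"
  assumes "\<alpha> \<notin> insert (\<lambda>_. 0) (range (\<lambda>i k. if k = i then 1 else 0))"
  shows "(\<Sum>i\<in>UNIV. \<alpha> i) \<ge> 2"
proof (rule ccontr)
  assume "\<not> ?thesis"
  then consider "(\<Sum>i\<in>UNIV. \<alpha> i) = 0" | "(\<Sum>i\<in>UNIV. \<alpha> i) = 1"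
    by linarith
  then show False
  proof cases
    case 1
    then have "\<alpha> = (\<lambda>_. 0)"
      by (auto simp: fun_eq_iff)
    then show False
      using assms by auto
  next
    case 2
    then obtain i where "\<alpha> i = 1" "\<And>k. k \<noteq> i \<Longrightarrow> \<alpha> k = 0"
      using sum_eq_1_iff[of UNIV \<alpha>] by auto
    then have "\<alpha> = (\<lambda>k. if k = i then 1 else 0)"
      by (auto simp: fun_eq_iff)
    then show False
      using assms by auto
  qed
qed

lemma sum_monomials_degree_le_1:
  fixes c :: "('s::finite \<Rightarrow> nat) \<Rightarrow> 'b::real_vector" and w :: "real^'s"
  defines "e \<equiv> \<lambda>i k. if k = i then 1 else 0"
  shows "(\<Sum>\<alpha>\<in>insert (\<lambda>_. 0) (range e). (\<Prod>i\<in>UNIV. (w$i) ^ \<alpha> i) *\<^sub>R c \<alpha>)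
      = c (\<lambda>_. 0) + (\<Sum>i\<in>UNIV. w$i *\<^sub>R c (e i))"
proof -
  have "inj e"
    unfolding e_def inj_def by (metis zero_neq_one)
  moreover have "(\<lambda>_. 0) \<notin> range e"
    unfolding e_def by (auto simp: fun_eq_iff) (metis zero_neq_one)
  moreover have "(\<Prod>k\<in>UNIV. (w$k) ^ e i k) = w$i" for i
  proof -
    have "(\<Prod>k\<in>UNIV. (w$k) ^ e i k) = (\<Prod>k\<in>UNIV. if k = i then w$k else 1)"
      by (rule prod.cong) (auto simp: e_def)
    then show ?thesis
      by simp
  qed
  ultimately show ?thesis
    by (simp add: sum.reindex)
qed

lemma monomial_le_quadratic:
  fixes w :: "real^'s" and \<alpha> :: "'s \<Rightarrow> nat"
  assumes w: "norm w \<le> r" and r: "r > 0" and deg: "(\<Sum>i\<in>UNIV. \<alpha> i) \<ge> 2"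
  shows "(\<Prod>i\<in>UNIV. \<bar>w$i\<bar> ^ \<alpha> i) \<le> (norm w / r)^2 * (\<Prod>i\<in>UNIV. r ^ \<alpha> i)"
proof -
  obtain k where k: "(\<Sum>i\<in>UNIV. \<alpha> i) = k + 2"
    using deg le_Suc_ex by (metis add.commute)
  have "(\<Prod>i\<in>UNIV. \<bar>w$i\<bar> ^ \<alpha> i) \<le> (\<Prod>i\<in>UNIV. norm w ^ \<alpha> i)"
    by (intro prod_mono conjI power_mono component_le_norm_cart) auto
  also have "\<dots> = norm w ^ k * norm w ^ 2"
    by (simp add: k power_add power2_eq_square flip: power_sum)
  also have "\<dots> \<le> r ^ k * norm w ^ 2"
    by (intro mult_right_mono power_mono w) auto
  also have "\<dots> = (norm w / r)^2 * (\<Prod>i\<in>UNIV. r ^ \<alpha> i)"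
    using r by (simp add: k power_add power_divide power2_eq_square flip: power_sum)
  finally show ?thesis .
qed

lemma power_series_quadratic_remainder:
  fixes c :: "('s::finite \<Rightarrow> nat) \<Rightarrow> 'b::real_normed_vector" and w :: "real^'s" and r :: real
  defines "e \<equiv> \<lambda>i k. if k = i then 1 else 0"
    and "K \<equiv> \<Sum>\<^sub>\<infinity>\<alpha>. norm (c \<alpha>) * (\<Prod>i\<in>UNIV. r ^ \<alpha> i)"
  assumes summ: "(\<lambda>\<alpha>. norm (c \<alpha>) * (\<Prod>i\<in>UNIV. r ^ \<alpha> i)) summable_on UNIV"
    and series: "((\<lambda>\<alpha>. (\<Prod>i\<in>UNIV. (w$i) ^ \<alpha> i) *\<^sub>R c \<alpha>) has_sum y) UNIV"
    and w: "norm w \<le> r" and r: "r > 0"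
  shows "norm (y - c (\<lambda>_. 0) - (\<Sum>i\<in>UNIV. w$i *\<^sub>R c (e i))) \<le> K / r^2 * norm w ^ 2"
proof -
  define N where "N = insert (\<lambda>_. 0) (range e)"
  define T where "T = (\<lambda>\<alpha>. (\<Prod>i\<in>UNIV. (w$i) ^ \<alpha> i) *\<^sub>R c \<alpha>)"
  define M where "M = (\<lambda>\<alpha>. (norm w / r)^2 * (norm (c \<alpha>) * (\<Prod>i\<in>UNIV. r ^ \<alpha> i)))"
  have T_sum: "(T has_sum (y - (c (\<lambda>_. 0) + (\<Sum>i\<in>UNIV. w$i *\<^sub>R c (e i))))) (UNIV - N)"
    using has_sum_Diff[OF series has_sum_finite[of N]]
    by (simp add: N_def T_def e_def sum_monomials_degree_le_1)
  have M: "(M has_sum ((norm w / r)^2 * K)) UNIV"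
    unfolding M_def K_def by (intro has_sum_cmult_right) (use summ in auto)
  have M_summable: "M summable_on UNIV - N"
    using M summable_on_subset[of M UNIV "UNIV - N"] by (auto simp: summable_on_def)
  have M_nonneg: "M \<alpha> \<ge> 0" for \<alpha>
    using r unfolding M_def by (auto intro!: mult_nonneg_nonneg prod_nonneg)
  have bound: "norm (T \<alpha>) \<le> M \<alpha>" if "\<alpha> \<in> UNIV - N" for \<alpha>
  proof -
    have "(\<Sum>i\<in>UNIV. \<alpha> i) \<ge> 2"
      using that sum_multiindex_ge_2 unfolding N_def e_def by blast
    from monomial_le_quadratic[OF w r this]
    have "(\<Prod>i\<in>UNIV. \<bar>w$i\<bar> ^ \<alpha> i) * norm (c \<alpha>) \<le>
        (norm w / r)^2 * (\<Prod>i\<in>UNIV. r ^ \<alpha> i) * norm (c \<alpha>)"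
      by (rule mult_right_mono) simp
    then show ?thesis
      unfolding M_def T_def by (simp add: abs_prod power_abs mult_ac)
  qed
  have "norm (y - (c (\<lambda>_. 0) + (\<Sum>i\<in>UNIV. w$i *\<^sub>R c (e i)))) \<le> (\<Sum>\<^sub>\<infinity>\<alpha>\<in>UNIV - N. M \<alpha>)"
    by (rule norm_infsum_le[OF T_sum has_sum_infsum[OF M_summable] bound])
  also have "\<dots> \<le> (\<Sum>\<^sub>\<infinity>\<alpha>. M \<alpha>)"
    by (rule infsum_mono_neutral[OF M_summable has_sum_imp_summable[OF M]]) (use M_nonneg in auto)
  also have "\<dots> = (norm w / r)^2 * K"
    using M by (rule infsumI)
  also have "\<dots> = K / r^2 * norm w ^ 2"
    by (simp add: power_divide)
  finally show ?thesis
    by (simp add: algebra_simps)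
qed

lemma has_derivative_of_quadratic_remainder:
  fixes h :: "'a::real_normed_vector \<Rightarrow> 'b::real_normed_vector"
  assumes L: "bounded_linear L" and r: "r > 0"
    and remainder: "\<And>w. norm w \<le> r \<Longrightarrow> norm (h (x0 + w) - h x0 - L w) \<le> K * norm w ^ 2"
  shows "(h has_derivative L) (at x0)"
  unfolding has_derivative_at_alt
proof (intro conjI L allI impI)
  fix \<epsilon> :: real
  assume \<epsilon>: "\<epsilon> > 0"
  define C where "C = \<bar>K\<bar> + 1"
  have C: "C > 0"
    by (simp add: C_def add_nonneg_pos)
  show "\<exists>d>0. \<forall>y. norm (y - x0) < d \<longrightarrow> norm (h y - h x0 - L (y - x0)) \<le> \<epsilon> * norm (y - x0)"
  proof (intro exI conjI allI impI)
    show "min r (\<epsilon> / C) > 0"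
      using \<epsilon> r C by simp
    fix y
    assume y: "norm (y - x0) < min r (\<epsilon> / C)"
    define w where "w = y - x0"
    have "norm (h y - h x0 - L w) \<le> K * norm w ^ 2"
      using remainder[of w] y by (simp add: w_def)
    also have "\<dots> \<le> C * (norm w * norm w)"
      unfolding power2_eq_square by (intro mult_right_mono) (auto simp: C_def)
    also have "\<dots> \<le> C * (\<epsilon> / C * norm w)"
      using y C by (intro mult_left_mono mult_right_mono) (auto simp: w_def)
    also have "\<dots> = \<epsilon> * norm w"
      using C by simp
    finally show "norm (h y - h x0 - L (y - x0)) \<le> \<epsilon> * norm (y - x0)"
      by (simp add: w_def)
  qed
qed

lemma summable_on_sum:
  fixes g :: "'j \<Rightarrow> 'a \<Rightarrow> 'b::topological_comm_monoid_add"
  assumes "finite I" "\<And>j. j \<in> I \<Longrightarrow> g j summable_on A"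
  shows "(\<lambda>\<alpha>. \<Sum>j\<in>I. g j \<alpha>) summable_on A"
  using assms by (induct rule: finite_induct) (auto intro: summable_on_add)

lemma real_analytic_differentiable:
  fixes h :: "real^'s \<Rightarrow> real^'m"
  assumes "real_analytic h"
  shows "h differentiable (at x0)"
proof -
  obtain r c where r: "r > 0"
    and series: "\<And>y. (\<forall>i. \<bar>y$i - x0$i\<bar> \<le> r) \<Longrightarrow>
       ((\<lambda>\<alpha>. (\<Prod>i\<in>UNIV. (y$i - x0$i) ^ \<alpha> i) *\<^sub>R c \<alpha>) has_sum h y) UNIV"
    and summ: "\<And>j. (\<lambda>\<alpha>. \<bar>c \<alpha> $ j\<bar> * (\<Prod>i\<in>UNIV. r ^ \<alpha> i)) summable_on UNIV"
    using real_analytic_local_power_series[OF assms, of x0] by blast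
  define L where "L = (\<lambda>w::real^'s. \<Sum>i\<in>UNIV. w$i *\<^sub>R c (\<lambda>k. if k = i then 1 else 0))"
  define K where "K = (\<Sum>\<^sub>\<infinity>\<alpha>. norm (c \<alpha>) * (\<Prod>i\<in>UNIV. r ^ \<alpha> i)) / r^2"
  have "(\<lambda>\<alpha>. norm (c \<alpha>) * (\<Prod>i\<in>UNIV. r ^ \<alpha> i)) summable_on UNIV"
  proof (rule summable_on_comparison_test)
    show "(\<lambda>\<alpha>. \<Sum>j\<in>UNIV. \<bar>c \<alpha> $ j\<bar> * (\<Prod>i\<in>UNIV. r ^ \<alpha> i)) summable_on UNIV"
      by (rule summable_on_sum) (use summ in auto)
    fix \<alpha> :: "'s \<Rightarrow> nat"
    have P: "(\<Prod>i\<in>UNIV. r ^ \<alpha> i) \<ge> 0"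
      using r by (auto intro: prod_nonneg)
    then show "0 \<le> norm (c \<alpha>) * (\<Prod>i\<in>UNIV. r ^ \<alpha> i)"
      by simp
    have "norm (c \<alpha>) * (\<Prod>i\<in>UNIV. r ^ \<alpha> i) \<le> (\<Sum>j\<in>UNIV. \<bar>c \<alpha> $ j\<bar>) * (\<Prod>i\<in>UNIV. r ^ \<alpha> i)"
      by (intro mult_right_mono norm_le_l1_cart P)
    then show "norm (c \<alpha>) * (\<Prod>i\<in>UNIV. r ^ \<alpha> i) \<le> (\<Sum>j\<in>UNIV. \<bar>c \<alpha> $ j\<bar> * (\<Prod>i\<in>UNIV. r ^ \<alpha> i))"
      by (simp add: sum_distrib_right)
  qed
  then have remainder: "norm (h (x0 + w) - c (\<lambda>_. 0) - L w) \<le> K * norm w ^ 2"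
    if "norm w \<le> r" for w
    unfolding L_def K_def
  proof (rule power_series_quadratic_remainder[OF _ _ that r])
    have "\<forall>i. \<bar>(x0 + w)$i - x0$i\<bar> \<le> r"
      using that component_le_norm_cart order_trans by fastforce
    then show "((\<lambda>\<alpha>. (\<Prod>i\<in>UNIV. (w$i) ^ \<alpha> i) *\<^sub>R c \<alpha>) has_sum h (x0 + w)) UNIV"
      using series by fastforce
  qed
  have "h x0 = c (\<lambda>_. 0)"
    using remainder[of 0] r by (simp add: L_def)
  moreover have "bounded_linear L"
    unfolding L_def by (intro bounded_linear_sum bounded_linear_scaleR_left
        bounded_linear_compose[OF _ bounded_linear_vec_nth])
  ultimately have "(h has_derivative L) (at x0)"
    using has_derivative_of_quadratic_remainder[OF _ r] remainder by metis
  then show ?thesis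
    unfolding differentiable_def by blast
qed

lemma real_analytic_comp_differentiable:
  fixes h :: "real^'s \<Rightarrow> real^'m" and f :: "real^'m \<Rightarrow> real^'n"
  assumes "real_analytic h" and "real_analytic f"
  shows "(f \<circ> h) differentiable (at z)"
  using real_analytic_differentiable[OF assms(1)] real_analytic_differentiable[OF assms(2)]
  by (rule differentiable_chain_at)

section \<open>Directional derivatives\<close>

lemma has_real_derivative_along_line:
  fixes g :: "real^'s \<Rightarrow> real^'n"
  assumes "(g has_derivative G) (at (x + t *\<^sub>R b))"
  shows "((\<lambda>s. g (x + s *\<^sub>R b) $ j) has_real_derivative G b $ j) (at t)"
proof -
  have "((\<lambda>s::real. x + s *\<^sub>R b) has_derivative (\<lambda>s. s *\<^sub>R b)) (at t)"
    by (auto intro!: derivative_eq_intros)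
  then have "((g \<circ> (\<lambda>s::real. x + s *\<^sub>R b)) has_derivative (G \<circ> (\<lambda>s. s *\<^sub>R b))) (at t)"
    using assms by (rule diff_chain_at)
  moreover have "linear G"
    using assms has_derivative_linear by blast
  ultimately have "((\<lambda>s. g (x + s *\<^sub>R b)) has_derivative (\<lambda>s. s *\<^sub>R G b)) (at t)"
    by (simp add: comp_def linear_cmul[of G] linear_scale)
  then have "((\<lambda>s. g (x + s *\<^sub>R b) $ j) has_derivative (\<lambda>s. (s *\<^sub>R G b) $ j)) (at t)"
    by (rule has_derivative_compose[OF _ bounded_linear_imp_has_derivative[OF bounded_linear_vec_nth],
          unfolded comp_def])
  then show ?thesis
    unfolding has_field_derivative_def by (rule has_derivative_eq_rhs) (simp add: fun_eq_iff mult.commute)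
qed

lemma frechet_derivative_eq_0_of_constant_along_line:
  fixes h :: "real^'s \<Rightarrow> real^'m"
  assumes "h differentiable (at x)" and "\<And>t. h (x + t *\<^sub>R b) = h x"
  shows "frechet_derivative h (at x) b = 0"
proof -
  have "(h has_derivative frechet_derivative h (at x)) (at (x + 0 *\<^sub>R b))"
    using frechet_derivative_works[THEN iffD1, OF assms(1)] by simp
  then have "((\<lambda>s. h (x + s *\<^sub>R b) $ j) has_real_derivative frechet_derivative h (at x) b $ j) (at 0)" for j
    by (rule has_real_derivative_along_line)
  moreover have "((\<lambda>s. h (x + s *\<^sub>R b) $ j) has_real_derivative 0) (at 0)" for j
    using assms(2) by simp
  ultimately show ?thesis
    by (metis DERIV_unique vec_eq_iff zero_index)
qed

lemma borel_measurable_frechet_derivative_component: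
  fixes g :: "real^'s \<Rightarrow> real^'n"
  assumes dg: "\<And>z. g differentiable (at z)"
  shows "(\<lambda>z. frechet_derivative g (at z) a $ i) \<in> borel_measurable borel"
proof (rule borel_measurable_LIMSEQ_real)
  have g: "continuous_on UNIV g"
    using dg differentiable_imp_continuous_on differentiable_at_imp_differentiable_on by blast
  define F where "F = (\<lambda>n z. (g (z + inverse (real (Suc n)) *\<^sub>R a) $ i - g z $ i) / inverse (real (Suc n)))"
  show "F n \<in> borel_measurable borel" for n
  proof (rule borel_measurable_continuous_onI)
    have "continuous_on UNIV (\<lambda>z. g (z + inverse (real (Suc n)) *\<^sub>R a))"
      by (rule continuous_on_compose2[OF g]) (auto intro!: continuous_intros)
    then show "continuous_on UNIV (F n)"
      unfolding F_def by (intro continuous_intros g) auto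
  qed
  show "(\<lambda>n. F n z) \<longlonglongrightarrow> frechet_derivative g (at z) a $ i" for z
  proof -
    have "(g has_derivative frechet_derivative g (at z)) (at (z + 0 *\<^sub>R a))"
      using frechet_derivative_works[THEN iffD1, OF dg] by simp
    then have "((\<lambda>t. g (z + t *\<^sub>R a) $ i) has_real_derivative frechet_derivative g (at z) a $ i) (at 0)"
      by (rule has_real_derivative_along_line)
    then have "((\<lambda>t. (g (z + t *\<^sub>R a) $ i - g z $ i) / t) \<longlongrightarrow> frechet_derivative g (at z) a $ i) (at 0)"
      unfolding DERIV_def by simp
    then show ?thesis
      using LIMSEQ_inverse_real_of_nat unfolding tendsto_at_iff_sequentially F_def comp_def by auto
  qed
qed

lemma Dmat_eq_0_iff: "Dmat g z = 0 \<longleftrightarrow> (\<forall>j. frechet_derivative g (at z) (axis j 1) = 0)"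
  by (auto simp: Dmat_def matrix_def vec_eq_iff)

lemma sets_borel_Dmat_eq_0:
  fixes g :: "real^'s \<Rightarrow> real^'n"
  assumes "\<And>z. g differentiable (at z)" and "A \<in> sets borel"
  shows "{z \<in> A. Dmat g z = 0} \<in> sets borel"
proof -
  note [measurable] = borel_measurable_frechet_derivative_component[OF assms(1)]
  have "{z \<in> A. Dmat g z = 0} = {z \<in> A. \<forall>j i. frechet_derivative g (at z) (axis j 1) $ i = 0}"
    unfolding Dmat_eq_0_iff by (simp add: vec_eq_iff)
  also have "\<dots> \<in> sets borel"
    using assms(2) by measurable
  finally show ?thesis .
qed

lemma jacobian_J_eq_0:
  fixes h :: "real^'s \<Rightarrow> real^'m"
  assumes "frechet_derivative h (at v) (axis k 1) = 0"
  shows "jacobian_J h v = 0"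
proof -
  have "column k (transpose (Dmat h v) ** Dmat h v) = 0"
    using assms by (simp add: Dmat_def column_def vec_eq_iff matrix_matrix_mult_def transpose_def matrix_def)
  then have "det (transpose (Dmat h v) ** Dmat h v) = 0"
    by (rule det_zero_column(1))
  then show ?thesis
    by (simp add: jacobian_J_def)
qed

section \<open>Saturating a set along lines\<close>

lemma sets_borel_line_slice:
  fixes S :: "'a::euclidean_space set"
  assumes "S \<in> sets borel"
  shows "{t::real. x + t *\<^sub>R b \<in> S} \<in> sets borel"
  using assms by measurable

lemma emeasure_line_slice:
  fixes S :: "'a::euclidean_space set"
  assumes "S \<in> sets borel"
  shows "emeasure lborel {t::real. x + t *\<^sub>R b \<in> S} = (\<integral>\<^sup>+t. indicator S (x + t *\<^sub>R b) \<partial>lborel)"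
proof -
  have "emeasure lborel {t::real. x + t *\<^sub>R b \<in> S} =
      (\<integral>\<^sup>+t. indicator {t::real. x + t *\<^sub>R b \<in> S} t \<partial>lborel)"
    using sets_borel_line_slice[OF assms] by (simp add: nn_integral_indicator)
  also have "\<dots> = (\<integral>\<^sup>+t. indicator S (x + t *\<^sub>R b) \<partial>lborel)"
    by (intro nn_integral_cong) (auto simp: indicator_def)
  finally show ?thesis .
qed

lemma emeasure_lborel_vimage_plus:
  fixes A :: "'a::euclidean_space set"
  assumes "A \<in> sets borel"
  shows "emeasure lborel ((\<lambda>s. c + s) -` A) = emeasure lborel A"
proof -
  have "emeasure lborel A = emeasure (distr lborel borel ((+) c)) A"
    by (simp add: lborel_distr_plus)
  also have "\<dots> = emeasure lborel ((+) c -` A \<inter> space lborel)"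
    by (rule emeasure_distr) (use assms in auto)
  finally show ?thesis
    by simp
qed

lemma nn_integral_lborel_translate:
  fixes f :: "'a::euclidean_space \<Rightarrow> ennreal"
  assumes "f \<in> borel_measurable borel"
  shows "(\<integral>\<^sup>+x. f (x + c) \<partial>lborel) = (\<integral>\<^sup>+x. f x \<partial>lborel)"
proof -
  have "(\<integral>\<^sup>+x. f x \<partial>lborel) = (\<integral>\<^sup>+x. f x \<partial>distr lborel borel ((+) c))"
    by (simp add: lborel_distr_plus)
  also have "\<dots> = (\<integral>\<^sup>+x. f (c + x) \<partial>lborel)"
    by (rule nn_integral_distr) (use assms in auto)
  finally show ?thesis
    by (simp add: add.commute)
qed

definition line_saturation :: "'a::euclidean_space set \<Rightarrow> 'a \<Rightarrow> 'a set" where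
  "line_saturation S b = {x. 0 < emeasure lborel {t::real. x + t *\<^sub>R b \<in> S}}"

lemma sets_line_saturation:
  assumes "S \<in> sets borel"
  shows "line_saturation S b \<in> sets borel"
proof -
  have "(\<lambda>(x, t). indicator S (x + t *\<^sub>R b) :: ennreal) \<in> borel_measurable (lborel \<Otimes>\<^sub>M lborel)"
    using assms by measurable
  then have "(\<lambda>x. \<integral>\<^sup>+t. indicator S (x + t *\<^sub>R b) \<partial>lborel) \<in> borel_measurable lborel"
    using lborel.borel_measurable_nn_integral by simp
  then have "(\<lambda>x. \<integral>\<^sup>+t. indicator S (x + t *\<^sub>R b) \<partial>lborel) -` {0<..} \<inter> space lborel \<in> sets lborel"
    by (rule measurable_sets) auto
  then show ?thesis
    unfolding line_saturation_def using emeasure_line_slice[OF assms] by (auto simp: vimage_def)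
qed

lemma line_saturation_translate:
  assumes "S \<in> sets borel"
  shows "x + t *\<^sub>R b \<in> line_saturation S b \<longleftrightarrow> x \<in> line_saturation S b"
proof -
  have "{s::real. x + t *\<^sub>R b + s *\<^sub>R b \<in> S} = (\<lambda>s. t + s) -` {s. x + s *\<^sub>R b \<in> S}"
    by (auto simp: algebra_simps)
  then show ?thesis
    unfolding line_saturation_def
    using emeasure_lborel_vimage_plus[OF sets_borel_line_slice[OF assms]] by simp
qed

lemma line_saturation_translate_invariant:
  assumes "S \<in> sets borel" and "\<And>y s. y \<in> S \<Longrightarrow> y + s *\<^sub>R c \<in> S"
    and "x \<in> line_saturation S b"
  shows "x + t *\<^sub>R c \<in> line_saturation S b"
proof -
  have "{s::real. x + s *\<^sub>R b \<in> S} \<subseteq> {s. x + t *\<^sub>R c + s *\<^sub>R b \<in> S}"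
  proof
    fix s
    assume "s \<in> {s. x + s *\<^sub>R b \<in> S}"
    then have "x + s *\<^sub>R b + t *\<^sub>R c \<in> S"
      using assms(2) by blast
    then show "s \<in> {s. x + t *\<^sub>R c + s *\<^sub>R b \<in> S}"
      by (simp add: algebra_simps)
  qed
  then have "emeasure lborel {s::real. x + s *\<^sub>R b \<in> S} \<le> emeasure lborel {s. x + t *\<^sub>R c + s *\<^sub>R b \<in> S}"
    by (rule emeasure_mono) (use sets_borel_line_slice[OF assms(1)] in simp)
  then show ?thesis
    using assms(3) unfolding line_saturation_def by auto
qed

text \<open>By Fubini, almost every point of \<open>S\<close> lies on a line meeting \<open>S\<close> in positive measure.\<close>

lemma emeasure_line_saturation_ne_0:
  fixes S :: "'a::euclidean_space set"
  assumes S: "S \<in> sets borel" and pos: "emeasure lborel S \<noteq> 0"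
  shows "emeasure lborel (line_saturation S b) \<noteq> 0"
proof -
  define W where "W = S - line_saturation S b"
  have W: "W \<in> sets borel"
    unfolding W_def using S sets_line_saturation[OF S] by auto
  have slices_null: "(\<integral>\<^sup>+t. indicator W (x + t *\<^sub>R b) \<partial>lborel) = 0" for x
  proof (cases "x \<in> line_saturation S b")
    case True
    then have "indicator W (x + t *\<^sub>R b) = (0 :: ennreal)" for t
      using line_saturation_translate[OF S] by (auto simp: W_def indicator_def)
    then show ?thesis
      by simp
  next
    case False
    then have "indicator W (x + t *\<^sub>R b) = (indicator S (x + t *\<^sub>R b) :: ennreal)" for t
      using line_saturation_translate[OF S] by (auto simp: W_def indicator_def)
    then have "(\<integral>\<^sup>+t. indicator W (x + t *\<^sub>R b) \<partial>lborel) = emeasure lborel {t::real. x + t *\<^sub>R b \<in> S}"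
      using emeasure_line_slice[OF S] by simp
    also have "\<dots> = 0"
      using False unfolding line_saturation_def by (simp add: not_gr_zero)
    finally show ?thesis .
  qed
  have "(\<lambda>(x, t). indicator W (x + t *\<^sub>R b) :: ennreal) \<in> borel_measurable (lborel \<Otimes>\<^sub>M lborel)"
    using W by measurable
  moreover have "pair_sigma_finite (lborel :: 'a measure) (lborel :: real measure)"
    by (simp add: pair_sigma_finite_def lborel.sigma_finite_measure_axioms)
  ultimately have "(\<integral>\<^sup>+t. (\<integral>\<^sup>+x. indicator W (x + t *\<^sub>R b) \<partial>lborel) \<partial>(lborel::real measure)) =
      (\<integral>\<^sup>+x. (\<integral>\<^sup>+t. indicator W (x + t *\<^sub>R b) \<partial>lborel) \<partial>lborel)"
    using pair_sigma_finite.Fubini' by fastforce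
  also have "\<dots> = 0"
    by (simp add: slices_null)
  finally have "(\<integral>\<^sup>+t. (\<integral>\<^sup>+x. indicator W (x + t *\<^sub>R b) \<partial>lborel) \<partial>(lborel::real measure)) = 0" .
  moreover have "(\<integral>\<^sup>+x. indicator W (x + t *\<^sub>R b) \<partial>lborel) = emeasure lborel W" for t
    using nn_integral_lborel_translate[of "indicator W" "t *\<^sub>R b"] W by (simp add: nn_integral_indicator)
  ultimately have "emeasure lborel W * emeasure (lborel::real measure) UNIV = 0"
    by (simp add: nn_integral_const)
  then have "emeasure lborel W = 0"
    by simp
  moreover have "emeasure lborel S \<le> emeasure lborel (line_saturation S b \<union> W)"
    by (rule emeasure_mono) (use S sets_line_saturation[OF S] in \<open>auto simp: W_def\<close>)
  moreover have "\<dots> \<le> emeasure lborel (line_saturation S b) + emeasure lborel W"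
    by (rule emeasure_subadditive) (use W sets_line_saturation[OF S] in auto)
  ultimately show ?thesis
    using pos by (metis add.right_neutral le_zero_eq order_trans)
qed

lemma holomorphic_extendable_zero_on_line_saturation:
  assumes ext: "\<And>x. holomorphic_extendable (\<lambda>t. u (x + t *\<^sub>R b))"
    and zero: "\<And>x. x \<in> S \<Longrightarrow> u x = 0" and x: "x \<in> line_saturation S b"
  shows "u x = 0"
proof -
  have "emeasure lborel {t::real. x + t *\<^sub>R b \<in> S} \<noteq> 0"
    using x unfolding line_saturation_def by simp
  then obtain \<xi> where "\<xi> islimpt {t::real. x + t *\<^sub>R b \<in> S}"
    by (rule islimpt_of_emeasure_lborel_ne_0)
  from holomorphic_extendable_eq_0[OF ext this] have "u (x + 0 *\<^sub>R b) = 0"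
    using zero by blast
  then show ?thesis
    by simp
qed

lemma translation_invariant_Basis_eq_UNIV:
  fixes S :: "'a::euclidean_space set"
  assumes "S \<noteq> {}" and inv: "\<forall>c\<in>Basis. \<forall>y\<in>S. \<forall>t. y + t *\<^sub>R c \<in> S"
  shows "S = UNIV"
proof -
  obtain x0 where x0: "x0 \<in> S"
    using assms(1) by blast
  have sums: "x0 + (\<Sum>c\<in>J. a c *\<^sub>R c) \<in> S" if "finite J" "J \<subseteq> Basis" for J a
    using that
  proof (induct J rule: finite_induct)
    case empty
    then show ?case
      using x0 by simp
  next
    case (insert b J)
    then have "x0 + (\<Sum>c\<in>J. a c *\<^sub>R c) + a b *\<^sub>R b \<in> S"
      using inv by auto
    then show ?case
      using insert by (simp add: algebra_simps)
  qed
  have "x \<in> S" for x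
    using sums[of Basis "\<lambda>c. (x - x0) \<bullet> c"] by (simp add: euclidean_representation)
  then show ?thesis
    by blast
qed

text \<open>Saturating \<open>S\<close> along one coordinate direction after another keeps it a zero set of \<open>u\<close>
  of positive measure, and makes it invariant under translation in all directions treated so far;
  after all of them it is the whole space.\<close>

lemma holomorphic_extendable_on_lines_eq_0:
  fixes u :: "'a::euclidean_space \<Rightarrow> real"
  assumes ext: "\<And>y b. b \<in> Basis \<Longrightarrow> holomorphic_extendable (\<lambda>t. u (y + t *\<^sub>R b))"
    and S: "S \<in> sets borel" "emeasure lborel S \<noteq> 0" "\<And>x. x \<in> S \<Longrightarrow> u x = 0"
  shows "u x = 0"
proof -
  have saturate: "\<exists>S'. S' \<in> sets borel \<and> emeasure lborel S' \<noteq> 0 \<and> (\<forall>x\<in>S'. u x = 0) \<and>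
      (\<forall>c\<in>I. \<forall>y\<in>S'. \<forall>t. y + t *\<^sub>R c \<in> S')" if "finite I" "I \<subseteq> Basis" for I
    using that
  proof (induct I rule: finite_induct)
    case empty
    then show ?case
      using S by blast
  next
    case (insert b I)
    then obtain S0 where S0: "S0 \<in> sets borel" "emeasure lborel S0 \<noteq> 0" "\<forall>x\<in>S0. u x = 0"
      "\<forall>c\<in>I. \<forall>y\<in>S0. \<forall>t. y + t *\<^sub>R c \<in> S0"
      by auto
    have b: "b \<in> Basis"
      using insert.prems by simp
    have "u x = 0" if "x \<in> line_saturation S0 b" for x
      by (rule holomorphic_extendable_zero_on_line_saturation[OF ext[OF b] _ that]) (use S0(3) in blast)
    moreover have "y + t *\<^sub>R c \<in> line_saturation S0 b"
      if "c \<in> insert b I" "y \<in> line_saturation S0 b" for c y t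
      using that(1)
    proof
      assume "c = b"
      then show ?thesis
        using line_saturation_translate[OF S0(1)] that(2) by simp
    next
      assume "c \<in> I"
      then show ?thesis
        using line_saturation_translate_invariant[OF S0(1) _ that(2)] S0(4) by blast
    qed
    ultimately show ?case
      using sets_line_saturation[OF S0(1)] emeasure_line_saturation_ne_0[OF S0(1,2)]
      by (intro exI[of _ "line_saturation S0 b"]) auto
  qed
  obtain S' where S': "emeasure lborel S' \<noteq> 0" "\<forall>x\<in>S'. u x = 0"
      "\<forall>c\<in>Basis. \<forall>y\<in>S'. \<forall>t. y + t *\<^sub>R c \<in> S'"
    using saturate[of Basis] by auto
  then have "S' = UNIV"
    by (intro translation_invariant_Basis_eq_UNIV) auto
  then show ?thesis
    using S'(2) by blast
qed

lemma real_analytic_line_eq_on_limpt: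
  fixes h :: "real^'s \<Rightarrow> real^'m"
  assumes "real_analytic h" and "\<xi> islimpt T" and "\<And>t. t \<in> T \<Longrightarrow> h (x + t *\<^sub>R b) = y"
  shows "h (x + s *\<^sub>R b) = y"
proof -
  have "h (x + s *\<^sub>R b) $ i - y $ i = 0" for i
  proof (rule holomorphic_extendable_eq_0[where \<phi> = "\<lambda>t. h (x + t *\<^sub>R b) $ i - y $ i", OF _ assms(2)])
    show "holomorphic_extendable (\<lambda>t. h (x + t *\<^sub>R b) $ i - y $ i)"
      by (rule holomorphic_extendable_diff[OF holomorphic_extendable_real_analytic_line[OF assms(1)]
            holomorphic_extendable_const])
  qed (use assms(3) in simp)
  then show ?thesis
    by (simp add: vec_eq_iff)
qed

lemma real_analytic_comp_line_const:
  fixes h :: "real^'s \<Rightarrow> real^'m" and f :: "real^'m \<Rightarrow> real^'n"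
  assumes h: "real_analytic h" and f: "real_analytic f" and "\<xi> islimpt T"
    and deriv_0: "\<And>t. t \<in> T \<Longrightarrow> frechet_derivative (f \<circ> h) (at (x + t *\<^sub>R b)) b = 0"
  shows "f (h (x + s *\<^sub>R b)) = f (h (x + t *\<^sub>R b))"
proof -
  have "((\<lambda>t. (f \<circ> h) (x + t *\<^sub>R b) $ j) has_real_derivative
      frechet_derivative (f \<circ> h) (at (x + t *\<^sub>R b)) b $ j) (at t)" for t j
    by (intro has_real_derivative_along_line frechet_derivative_works[THEN iffD1]
        real_analytic_comp_differentiable[OF h f])
  then have "deriv (\<lambda>t. f (h (x + t *\<^sub>R b)) $ j) t = frechet_derivative (f \<circ> h) (at (x + t *\<^sub>R b)) b $ j"
    for t j
    by (simp add: DERIV_imp_deriv)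
  then have "f (h (x + s *\<^sub>R b)) $ j = f (h (x + t *\<^sub>R b)) $ j" for j
    using holomorphic_extendable_const_of_deriv_eq_0[OF
        holomorphic_extendable_real_analytic_comp_line[OF h f] assms(3)] deriv_0 by simp
  then show ?thesis
    by (simp add: vec_eq_iff)
qed

lemma real_analytic_const_along_line:
  fixes h :: "real^'s \<Rightarrow> real^'m" and f :: "real^'m \<Rightarrow> real^'n"
  assumes h: "real_analytic h" and f: "real_analytic f" and inj: "inj_on f (h ` A)"
    and T: "emeasure lborel T \<noteq> 0"
    and on_T: "\<And>t. t \<in> T \<Longrightarrow> x + t *\<^sub>R b \<in> A \<and> frechet_derivative (f \<circ> h) (at (x + t *\<^sub>R b)) b = 0"
  shows "h (x + s *\<^sub>R b) = h x"
proof -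
  obtain \<xi> where \<xi>: "\<xi> islimpt T"
    using T by (rule islimpt_of_emeasure_lborel_ne_0)
  then obtain t1 where t1: "t1 \<in> T"
    unfolding islimpt_approachable by (meson zero_less_one)
  have "h (x + t *\<^sub>R b) = h (x + t1 *\<^sub>R b)" if "t \<in> T" for t
    using inj_onD[OF inj real_analytic_comp_line_const[OF h f \<xi>]] on_T that t1 by blast
  then have "h (x + s *\<^sub>R b) = h (x + t1 *\<^sub>R b)" for s
    by (rule real_analytic_line_eq_on_limpt[OF h \<xi>])
  from this[of s] this[of 0] show ?thesis
    by simp
qed

lemma real_analytic_translation_invariant:
  fixes h :: "real^'s \<Rightarrow> real^'m"
  assumes h: "real_analytic h" and S: "S \<in> sets borel" "emeasure lborel S \<noteq> 0"
    and inv: "\<And>x. x \<in> S \<Longrightarrow> h (x + s *\<^sub>R b) = h x"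
  shows "h (y + s *\<^sub>R b) = h y"
proof -
  have "h (y + s *\<^sub>R b) $ i - h y $ i = 0" for i
  proof (rule holomorphic_extendable_on_lines_eq_0[where u = "\<lambda>y. h (y + s *\<^sub>R b) $ i - h y $ i", OF _ S])
    show "holomorphic_extendable (\<lambda>t. h (z + t *\<^sub>R c + s *\<^sub>R b) $ i - h (z + t *\<^sub>R c) $ i)" for z c
      using holomorphic_extendable_diff[OF holomorphic_extendable_real_analytic_line[OF h, of "z + s *\<^sub>R b" c i]
          holomorphic_extendable_real_analytic_line[OF h, of z c i]]
      by (simp add: add_ac)
  qed (use inv in simp)
  then show ?thesis
    by (simp add: vec_eq_iff)
qed

theorem lemma16:
  fixes A :: "(real^'s) set"
    and h :: "real^'s \<Rightarrow> real^'m"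
    and f :: "real^'m \<Rightarrow> real^'n"
  assumes "A \<in> sets borel"
    and "emeasure lborel A > 0"
    and "CARD('s) \<le> CARD('m)"
    and "real_analytic h"
    and "\<exists>v. jacobian_J h v \<noteq> 0"
    and "real_analytic f"
    and "inj_on f (h ` A)"
  shows "AE z in lborel. z \<in> A \<longrightarrow> Dmat (f \<circ> h) z \<noteq> 0"
proof -
  define E where "E = {z \<in> A. Dmat (f \<circ> h) z = 0}"
  have E: "E \<in> sets borel"
    unfolding E_def using real_analytic_comp_differentiable[OF assms(4,6)] assms(1)
    by (rule sets_borel_Dmat_eq_0)
  have "emeasure lborel E = 0"
  proof (rule ccontr)
    assume "emeasure lborel E \<noteq> 0"
    obtain k :: 's where True
      by blast
    have "h (x + s *\<^sub>R axis k 1) = h x" if "x \<in> line_saturation E (axis k 1)" for x s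
      by (rule real_analytic_const_along_line[OF assms(4,6,7), of "{t. x + t *\<^sub>R axis k 1 \<in> E}"])
        (use that in \<open>auto simp: line_saturation_def E_def Dmat_eq_0_iff\<close>)
    then have "h (y + s *\<^sub>R axis k 1) = h y" for y s
      using real_analytic_translation_invariant[OF assms(4) sets_line_saturation[OF E]
          emeasure_line_saturation_ne_0[OF E \<open>emeasure lborel E \<noteq> 0\<close>]] by blast
    then have "jacobian_J h v = 0" for v
      by (intro jacobian_J_eq_0 frechet_derivative_eq_0_of_constant_along_line
          real_analytic_differentiable[OF assms(4)])
    then show False
      using assms(5) by blast
  qed
  then show ?thesis
    using E by (intro AE_I'[of E]) (auto simp: E_def)
qed

end
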